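(* Assume $X_0\in L^\infty$, $\beta\in\mathbb{R}$, $\lambda>0$. Let $w\in\mathscr{W}^{\mathrm{icx}}$. If $w(1)>w(1-)$, then $\inf_{Q\in\mathscr{Q}}L(Q,w;\beta,\lambda)=-\infty$.
   Context: $(\Omega,\mathcal{F},\mathbb{P})$ is a complete nonatomic probability space. $\rho\in L^2$ with $\mathbb{P}(\rho>0)=1$ and $\mathrm{Var}[\rho]>0$. For a random variable $X$, $Q_X(t)=\inf\{y:\mathbb{P}(X\le y)>t\}$ for $t\in[0,1)$, $Q_X(1):=\lim_{t\uparrow1}Q_X(t)$; $Q_0:=Q_{X_0}$. $\mathscr{Q}$ is the set of increasing, right-continuous $Q:[0,1)\to\mathbb{R}$ with $\int_0^1Q^2<\infty$ (extended by $Q(1)=Q(1-)$). $\mathscr{W}^{\mathrm{icx}}$ is the set of increasing convex $w:[0,1]\to[0,\infty)$ with $w(0)=0$; each $w$ is identified with the finite Borel measure on $[0,1]$ with distribution function $w$ (with $w(0-):=0$), so $\{1\}$ has mass $w(1)-w(1-)$. Define $$L(Q,w;\beta,\lambda)=\int_0^1(Q(s)-\beta)^2ds+\lambda\int_0^1Q(s)Q_\rho(1-s)ds-\Big(\int_{[0,1]}Q(s)dw(s)-\int_{[0,1]}Q_0(s)dw(s)\Big).$$ *)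

theory Defs
  imports "HOL-Probability.Probability"
begin

definition nonatomic :: "'a measure \<Rightarrow> bool" where
  "nonatomic M \<longleftrightarrow> (\<forall>A\<in>sets M. measure M A > 0 \<longrightarrow>
      (\<exists>B\<in>sets M. B \<subseteq> A \<and> 0 < measure M B \<and> measure M B < measure M A))"

definition qext :: "(real \<Rightarrow> real) \<Rightarrow> real \<Rightarrow> real" where
  "qext Q s = (if s < 1 then Q s else Lim (at_left 1) Q)"

definition quantile :: "'a measure \<Rightarrow> ('a \<Rightarrow> real) \<Rightarrow> real \<Rightarrow> real" where
  "quantile M X = qext (\<lambda>t. Inf {y. measure M {x \<in> space M. X x \<le> y} > t})"

definition Qset :: "(real \<Rightarrow> real) set" where
  "Qset = {Q. mono_on {0..<1} Q \<and> (\<forall>t\<in>{0..<1}. continuous (at_right t) Q)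
              \<and> set_integrable lborel {0..<1} (\<lambda>s. (Q s)\<^sup>2)}"

definition Wicx :: "(real \<Rightarrow> real) set" where
  "Wicx = {w. mono_on {0..1} w \<and> convex_on {0..1} w \<and> w 0 = 0 \<and> (\<forall>s\<in>{0..1}. w s \<ge> 0)}"

(* the finite Borel measure on [0,1] with distribution function w (w(0-) := 0) *)
definition wmeas :: "(real \<Rightarrow> real) \<Rightarrow> real measure" where
  "wmeas w = interval_measure (\<lambda>x. if x < 0 then 0 else if x \<le> 1 then w x else w 1)"

definition Lfun :: "'a measure \<Rightarrow> ('a \<Rightarrow> real) \<Rightarrow> ('a \<Rightarrow> real)
     \<Rightarrow> (real \<Rightarrow> real) \<Rightarrow> (real \<Rightarrow> real) \<Rightarrow> real \<Rightarrow> real \<Rightarrow> real" where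
  "Lfun M X0 \<rho> Q w \<beta> lam =
     (LINT s:{0..<1}|lborel. (Q s - \<beta>)\<^sup>2)
     + lam * (LINT s:{0..<1}|lborel. Q s * quantile M \<rho> (1 - s))
     - ((LINT s:{0..1}|wmeas w. qext Q s) - (LINT s:{0..1}|wmeas w. quantile M X0 s))"

end

theory Submission
  imports Defs
begin

text \<open>Take \<open>Q\<close> equal to \<open>c\<close> on the top tail \<open>[1 - 1/c\<^sup>2, 1)\<close> and \<open>0\<close> below it.
  Then \<open>\<integral>(Q - \<beta>)\<^sup>2 = \<beta>\<^sup>2 + 1 - 2\<beta>/c\<close> stays bounded, and since \<open>\<rho> > 0\<close> the quantile
  \<open>Q\<^sub>\<rho>\<close> is nonnegative, increasing and bounded on \<open>[0, 1/2]\<close>, so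
  \<open>\<integral> Q(s) Q\<^sub>\<rho>(1 - s) ds \<le> Q\<^sub>\<rho>(1/2) / c\<close> stays bounded too. But the
  \<open>w\<close>-integral of \<open>Q\<close> is at least \<open>c\<close> times the atom \<open>w(1) - w(1-)\<close> of \<open>w\<close> at \<open>1\<close>,
  so \<open>L \<le> const - c (w(1) - w(1-)) \<rightarrow> -\<infinity>\<close>. The \<open>Q\<^sub>0\<close>-term does not depend on \<open>Q\<close>.\<close>

definition lower_quantile :: "'a measure \<Rightarrow> ('a \<Rightarrow> real) \<Rightarrow> real \<Rightarrow> real" where
  "lower_quantile M X t = Inf {y. measure M {x \<in> space M. X x \<le> y} > t}"

lemma quantile_eq_qext_lower_quantile: "quantile M X = qext (lower_quantile M X)"
  by (simp add: quantile_def lower_quantile_def[abs_def])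

lemma (in prob_space) ex_cdf_gt_below_one:
  fixes X :: "'a \<Rightarrow> real"
  assumes "X \<in> borel_measurable M" "t < 1"
  shows "\<exists>y. t < measure M {x \<in> space M. X x \<le> y}"
proof -
  have "(\<lambda>i. measure M {x \<in> space M. X x \<le> real i}) \<longlonglongrightarrow> measure M (\<Union>i. {x \<in> space M. X x \<le> real i})"
    using assms(1) by (intro finite_Lim_measure_incseq) (auto simp: incseq_def intro: order_trans)
  moreover have "(\<Union>i. {x \<in> space M. X x \<le> real i}) = space M"
    using real_arch_simple by blast
  ultimately have "(\<lambda>i. measure M {x \<in> space M. X x \<le> real i}) \<longlonglongrightarrow> 1"
    by (simp add: prob_space)
  then have "eventually (\<lambda>i. t < measure M {x \<in> space M. X x \<le> real i}) sequentially"
    using assms(2) by (rule order_tendstoD)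
  then show ?thesis by (meson eventually_sequentially order_refl)
qed

lemma cdf_gt_nonneg_imp_pos:
  assumes "AE x in M. X x > (0::real)" "0 \<le> t" "t < measure M {x \<in> space M. X x \<le> y}"
  shows "0 < y"
proof (rule ccontr)
  assume "\<not> 0 < y"
  then have "AE x in M. \<not> X x \<le> y"
    using assms(1) by (auto elim: eventually_mono)
  then have "measure M {x \<in> space M. X x \<le> y} = 0"
    by (simp add: measure_def emeasure_eq_0_AE)
  with assms(2,3) show False by simp
qed

lemma (in prob_space) lower_quantile_nonneg:
  fixes X :: "'a \<Rightarrow> real"
  assumes "X \<in> borel_measurable M" "AE x in M. X x > 0" "0 \<le> t" "t < 1"
  shows "0 \<le> lower_quantile M X t"
  unfolding lower_quantile_def
proof (rule cInf_greatest)
  show "{y. t < measure M {x \<in> space M. X x \<le> y}} \<noteq> {}"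
    using ex_cdf_gt_below_one[OF assms(1,4)] by blast
qed (use cdf_gt_nonneg_imp_pos[OF assms(2,3)] in \<open>auto intro: less_imp_le\<close>)

lemma (in prob_space) lower_quantile_mono:
  fixes X :: "'a \<Rightarrow> real"
  assumes "X \<in> borel_measurable M" "AE x in M. X x > 0" "0 \<le> t" "t \<le> t'" "t' < 1"
  shows "lower_quantile M X t \<le> lower_quantile M X t'"
  unfolding lower_quantile_def
proof (rule cInf_superset_mono)
  show "{y. t' < measure M {x \<in> space M. X x \<le> y}} \<noteq> {}"
    using ex_cdf_gt_below_one[OF assms(1,5)] by blast
  show "bdd_below {y. t < measure M {x \<in> space M. X x \<le> y}}"
    using cdf_gt_nonneg_imp_pos[OF assms(2,3)] by (auto intro!: bdd_belowI[of _ 0] less_imp_le)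
qed (use assms(4) in auto)

lemma (in prob_space) quantile_near_0_bounded_mono:
  fixes X :: "'a \<Rightarrow> real"
  assumes "X \<in> borel_measurable M" "AE x in M. X x > 0"
  obtains g K where "mono g" "\<And>t. 0 \<le> g t \<and> g t \<le> K" "\<And>t. t \<in> {0..1/2} \<Longrightarrow> quantile M X t = g t"
proof
  let ?clamp = "\<lambda>t::real. max 0 (min t (1/2))"
  show "mono (\<lambda>t. lower_quantile M X (?clamp t))"
    by (intro monoI lower_quantile_mono[OF assms]) auto
  show "0 \<le> lower_quantile M X (?clamp t) \<and> lower_quantile M X (?clamp t) \<le> lower_quantile M X (1/2)" for t
    by (intro conjI lower_quantile_nonneg[OF assms] lower_quantile_mono[OF assms]) auto
  show "quantile M X t = lower_quantile M X (?clamp t)" if "t \<in> {0..1/2}" for t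
    using that by (simp add: quantile_eq_qext_lower_quantile qext_def)
qed

definition wcdf :: "(real \<Rightarrow> real) \<Rightarrow> real \<Rightarrow> real" where
  "wcdf w x = (if x < 0 then 0 else if x \<le> 1 then w x else w 1)"

lemma wmeas_eq_interval_measure: "wmeas w = interval_measure (wcdf w)"
  by (simp add: wmeas_def wcdf_def[abs_def])

lemma Wicx_le:
  assumes "w \<in> Wicx" "0 \<le> x" "x \<le> y" "y \<le> 1"
  shows "w x \<le> w y"
  using assms by (auto simp: Wicx_def intro: mono_onD)

lemma wcdf_mono:
  assumes "w \<in> Wicx" "x \<le> y"
  shows "wcdf w x \<le> wcdf w y"
  using assms Wicx_le[OF assms(1)] by (auto simp: wcdf_def Wicx_def)

lemma wcdf_continuous_at_right:
  assumes "w \<in> Wicx"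
  shows "continuous (at_right a) (wcdf w)"
proof -
  have cvx: "convex_on {0..1} w" and w0: "w 0 = 0" and wpos: "\<And>s. s \<in> {0..1} \<Longrightarrow> 0 \<le> w s"
    using assms by (auto simp: Wicx_def)
  have locally_const: "continuous (at_right a) (wcdf w)"
    if "\<forall>\<^sub>F x in at_right a. wcdf w x = wcdf w a"
    unfolding continuous_within using that by (rule tendsto_eventually)
  consider "a < 0" | "a = 0" | "0 < a" "a < 1" | "1 \<le> a" by linarith
  then show ?thesis
  proof cases
    case 1
    show ?thesis
      by (rule locally_const, use eventually_at_right_real[OF 1] in eventually_elim)
        (use 1 in \<open>auto simp: wcdf_def\<close>)
  next
    case 4
    show ?thesis
      by (rule locally_const, use eventually_at_right_less[of a] in eventually_elim)
        (use 4 in \<open>auto simp: wcdf_def\<close>)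
  next
    case 3
    have "continuous_on {0<..<1} w"
      by (rule convex_on_continuous) (auto intro: convex_on_subset[OF cvx])
    then have "(w \<longlongrightarrow> w a) (at_right a)"
      using 3 by (simp add: continuous_on_eq_continuous_at isCont_def filterlim_at_split)
    moreover have "\<forall>\<^sub>F x in at_right a. w x = wcdf w x"
      using eventually_at_right_real[OF 3(2)] by eventually_elim (use 3 in \<open>auto simp: wcdf_def\<close>)
    ultimately show ?thesis
      using 3 unfolding continuous_within by (auto simp: wcdf_def intro: Lim_transform_eventually)
  next
    case 2
    \<comment> \<open>convexity with \<open>w 0 = 0\<close> squeezes \<open>w x\<close> between \<open>0\<close> and \<open>x * w 1\<close>\<close>
    have ev01: "\<forall>\<^sub>F x in at_right 0. x \<in> {0<..<1::real}"
      by (rule eventually_at_right_real) simp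
    have "((\<lambda>x. x * w 1) \<longlongrightarrow> 0) (at_right 0)"
      by (rule tendsto_eq_intros) (auto intro: tendsto_intros)
    then have "(wcdf w \<longlongrightarrow> 0) (at_right 0)"
    proof (rule tendsto_sandwich[OF _ _ tendsto_const, rotated 2])
      show "\<forall>\<^sub>F x in at_right 0. 0 \<le> wcdf w x"
        using ev01 by eventually_elim (auto simp: wcdf_def intro: wpos)
      show "\<forall>\<^sub>F x in at_right 0. wcdf w x \<le> x * w 1"
        using ev01 by eventually_elim (use convex_onD[OF cvx, of _ 0 1] w0 in \<open>auto simp: wcdf_def\<close>)
    qed
    then show ?thesis using 2 w0 unfolding continuous_within by (simp add: wcdf_def)
  qed
qed

lemma Wicx_le_left_limit_at_1:
  assumes "w \<in> Wicx" "0 \<le> s" "s < 1"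
  shows "w s \<le> Lim (at_left 1) w"
proof -
  have "(w \<longlongrightarrow> Sup (w ` ({..<1} \<inter> {0..}))) (at 1 within {..<1} \<inter> {0..})"
    by (rule Lim_left_bound[where K = "w 1"]) (auto intro: Wicx_le[OF assms(1)])
  moreover have "at 1 within {..<1} \<inter> {0..} = at_left (1::real)"
    by (rule at_within_nhd[of _ "{0<..}"]) auto
  ultimately have "Lim (at_left 1) w = Sup (w ` ({..<1} \<inter> {0..}))"
    by (intro tendsto_Lim) simp_all
  moreover have "bdd_above (w ` ({..<1} \<inter> {0..}))"
    by (rule bdd_aboveI[where M = "w 1"]) (auto intro: Wicx_le[OF assms(1)])
  ultimately show ?thesis
    using assms(2,3) by (auto intro: cSup_upper)
qed

lemma measure_wmeas_tail_ge_jump: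
  assumes "w \<in> Wicx" "0 < e" "e \<le> 1"
  shows "emeasure (wmeas w) {1-e..1} < \<infinity>"
    and "w 1 - Lim (at_left 1) w \<le> measure (wmeas w) {1-e..1}"
proof -
  have Ioc: "emeasure (wmeas w) {a<..b} = wcdf w b - wcdf w a" if "a \<le> b" for a b
    unfolding wmeas_eq_interval_measure using that wcdf_mono[OF assms(1)] wcdf_continuous_at_right[OF assms(1)]
    by (intro emeasure_interval_measure_Ioc) auto
  have "emeasure (wmeas w) {1-e..1} \<le> emeasure (wmeas w) {-1<..1}"
    using assms by (intro emeasure_mono) (auto simp: wmeas_eq_interval_measure)
  also have "\<dots> < \<infinity>" by (simp add: Ioc)
  finally show fin: "emeasure (wmeas w) {1-e..1} < \<infinity>" .
  have "measure (wmeas w) {1-e<..1} = w 1 - w (1 - e)"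
    using assms Wicx_le[OF assms(1), of "1-e" 1] by (simp add: measure_def Ioc wcdf_def)
  moreover have "measure (wmeas w) {1-e<..1} \<le> measure (wmeas w) {1-e..1}"
    using fin by (intro measure_mono_fmeasurable) (auto simp: wmeas_eq_interval_measure fmeasurableI)
  moreover have "w (1 - e) \<le> Lim (at_left 1) w"
    using assms by (intro Wicx_le_left_limit_at_1) auto
  ultimately show "w 1 - Lim (at_left 1) w \<le> measure (wmeas w) {1-e..1}"
    by linarith
qed

definition tail_step :: "real \<Rightarrow> real \<Rightarrow> real \<Rightarrow> real" where
  "tail_step e c s = (if 1 - e \<le> s then c else 0)"

lemma mono_tail_step: "0 \<le> c \<Longrightarrow> mono (tail_step e c)"
  by (auto simp: tail_step_def intro!: monoI)

lemma tail_step_in_Qset: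
  assumes "0 \<le> c"
  shows "tail_step e c \<in> Qset"
  unfolding Qset_def
proof (intro CollectI conjI ballI)
  show "mono_on {0..<1} (tail_step e c)"
    using mono_tail_step[OF assms] by (simp add: mono_on_def monoD)
  show "continuous (at_right t) (tail_step e c)" for t
  proof -
    have "\<forall>\<^sub>F x in at_right t. tail_step e c x = tail_step e c t"
    proof (cases "1 - e \<le> t")
      case True
      show ?thesis
        using eventually_at_right_less[of t] by eventually_elim (use True in \<open>auto simp: tail_step_def\<close>)
    next
      case False
      then have "\<forall>\<^sub>F x in at_right t. x < 1 - e"
        by (intro eventually_at_right_real[of t "1 - e", THEN eventually_mono]) auto
      then show ?thesis
        by eventually_elim (use False in \<open>auto simp: tail_step_def\<close>)
    qed
    then show ?thesis
      unfolding continuous_within by (rule tendsto_eventually)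
  qed
  show "set_integrable lborel {0..<1} (\<lambda>s. (tail_step e c s)\<^sup>2)"
    unfolding set_integrable_def
    using borel_measurable_mono[OF mono_tail_step[OF assms]]
    by (intro integrableI_bounded_set_indicator[where B = "c\<^sup>2"]) (auto simp: tail_step_def)
qed

lemma set_integral_tail_step_sq:
  assumes "0 \<le> e" "e \<le> 1"
  shows "(LINT s:{0..<1}|lborel. (tail_step e c s - \<beta>)\<^sup>2) = (1 - e) * \<beta>\<^sup>2 + e * (c - \<beta>)\<^sup>2"
proof -
  have "indicator {0..<1} s *\<^sub>R (tail_step e c s - \<beta>)\<^sup>2
      = \<beta>\<^sup>2 * indicator {0..<1-e} s + (c - \<beta>)\<^sup>2 * indicator {1-e..<1} s" for s :: real
    using assms by (auto simp: tail_step_def indicator_def)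
  then show ?thesis
    using assms unfolding set_lebesgue_integral_def by (simp add: integrable_real_indicator)
qed

lemma set_integral_tail_step_reflected_le:
  assumes "mono g" "\<And>t. 0 \<le> g t \<and> g t \<le> K" "\<And>t. t \<in> {0..e} \<Longrightarrow> q t = g t"
    and "0 < e" "e \<le> 1" "0 \<le> c"
  shows "set_integrable lborel {0..<1} (\<lambda>s. tail_step e c s * q (1 - s))"
    and "(LINT s:{0..<1}|lborel. tail_step e c s * q (1 - s)) \<le> c * e * K"
proof -
  have eq: "indicator {0..<1} s *\<^sub>R (tail_step e c s * q (1 - s))
      = indicator {1-e..<1} s *\<^sub>R (c * g (1 - s))" for s :: real
    using assms(3-5) by (auto simp: tail_step_def indicator_def)
  have meas: "(\<lambda>s. c * g (1 - s)) \<in> borel_measurable lborel"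
    using borel_measurable_mono[OF assms(1)] by measurable
  have bound: "\<bar>c * g (1 - s)\<bar> \<le> c * K" for s
    using assms(2)[of "1 - s"] assms(6) by (simp add: abs_mult mult_left_mono)
  have int: "integrable lborel (\<lambda>s. indicator {1-e..<1} s *\<^sub>R (c * g (1 - s)))"
    using meas bound assms(4) by (intro integrableI_bounded_set_indicator[where B = "c * K"]) auto
  then show "set_integrable lborel {0..<1} (\<lambda>s. tail_step e c s * q (1 - s))"
    unfolding set_integrable_def eq .
  have "(LINT s:{0..<1}|lborel. tail_step e c s * q (1 - s))
      = (LINT s|lborel. indicator {1-e..<1} s *\<^sub>R (c * g (1 - s)))"
    unfolding set_lebesgue_integral_def eq ..
  also have "\<dots> \<le> (LINT s|lborel. c * K * indicator {1-e..<1} s)"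
  proof (rule integral_mono[OF int])
    show "integrable lborel (\<lambda>s. c * K * indicator {1-e..<1::real} s :: real)"
      using assms(4) by (intro integrable_mult_right integrable_real_indicator) auto
    show "indicator {1-e..<1} s *\<^sub>R (c * g (1 - s)) \<le> c * K * indicator {1-e..<1} s" for s :: real
      using abs_le_D1[OF bound[of s]] by (simp add: indicator_def)
  qed
  also have "\<dots> = c * e * K"
    using assms(4) by simp
  finally show "(LINT s:{0..<1}|lborel. tail_step e c s * q (1 - s)) \<le> c * e * K" .
qed

lemma set_integral_qext_tail_step:
  assumes "sets N = sets borel" "emeasure N {1-e..1} < \<infinity>" "0 < e" "e \<le> 1"
  shows "set_integrable N {0..1} (qext (tail_step e c))"
    and "(LINT s:{0..1}|N. qext (tail_step e c) s) = c * measure N {1-e..1}"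
proof -
  have "\<forall>\<^sub>F x in at_left 1. x \<in> {1-e<..<1::real}"
    using assms(3) by (intro eventually_at_left_real) simp
  then have "\<forall>\<^sub>F x in at_left 1. tail_step e c x = c"
    by eventually_elim (simp add: tail_step_def)
  then have "Lim (at_left 1) (tail_step e c) = c"
    by (intro tendsto_Lim tendsto_eventually) simp_all
  then have eq: "indicator {0..1} s *\<^sub>R qext (tail_step e c) s = c * indicator {1-e..1} s" for s :: real
    using assms(3,4) by (auto simp: tail_step_def indicator_def qext_def)
  show "set_integrable N {0..1} (qext (tail_step e c))"
    unfolding set_integrable_def eq using assms(1,2) by simp
  show "(LINT s:{0..1}|N. qext (tail_step e c) s) = c * measure N {1-e..1}"
    unfolding set_lebesgue_integral_def eq using assms(1,2) by simp
qed

lemma Lfun_tail_step_le: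
  assumes "mono g" "\<And>t. 0 \<le> g t \<and> g t \<le> K" "\<And>t. t \<in> {0..1/2} \<Longrightarrow> quantile M \<rho> t = g t"
    and "lam > 0" "w \<in> Wicx" "c \<ge> 2"
  defines "Q \<equiv> tail_step (1 / c\<^sup>2) c"
  shows "Q \<in> Qset" "set_integrable lborel {0..<1} (\<lambda>s. Q s * quantile M \<rho> (1 - s))"
    "set_integrable (wmeas w) {0..1} (qext Q)"
    "Lfun M X \<rho> Q w \<beta> lam \<le> \<beta>\<^sup>2 + 1 + \<bar>\<beta>\<bar> + lam * K
       - c * (w 1 - Lim (at_left 1) w) + (LINT s:{0..1}|wmeas w. quantile M X s)"
proof -
  define e where "e = 1 / c\<^sup>2"
  have c: "0 < c" "2 \<le> c" using assms(6) by simp_all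
  have "2\<^sup>2 \<le> c\<^sup>2" using c by (intro power_mono) auto
  then have e: "0 < e" "e \<le> 1/2" unfolding e_def using c by (simp_all add: field_simps)
  have Q: "Q = tail_step e c" unfolding Q_def e_def ..
  have tail: "emeasure (wmeas w) {1-e..1} < \<infinity>"
    "w 1 - Lim (at_left 1) w \<le> measure (wmeas w) {1-e..1}"
    using measure_wmeas_tail_ge_jump[OF assms(5) e(1)] e(2) by simp_all
  have sets_wmeas: "sets (wmeas w) = sets borel" by (simp add: wmeas_eq_interval_measure)
  note pairing = set_integral_tail_step_reflected_le[OF assms(1,2), of e "quantile M \<rho>" c]
  note w_integral = set_integral_qext_tail_step[OF sets_wmeas tail(1) e(1), of c]
  show "Q \<in> Qset" unfolding Q using c by (intro tail_step_in_Qset) simp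
  show "set_integrable lborel {0..<1} (\<lambda>s. Q s * quantile M \<rho> (1 - s))"
    unfolding Q using pairing e c assms(3) by simp
  show "set_integrable (wmeas w) {0..1} (qext Q)"
    unfolding Q using w_integral e by simp
  have "(LINT s:{0..<1}|lborel. (Q s - \<beta>)\<^sup>2) = (1 - e) * \<beta>\<^sup>2 + e * (c - \<beta>)\<^sup>2"
    unfolding Q using e by (intro set_integral_tail_step_sq) auto
  also have "\<dots> = \<beta>\<^sup>2 + 1 - 2 * \<beta> / c"
    unfolding e_def using c by (simp add: power2_eq_square field_simps)
  also have "\<dots> \<le> \<beta>\<^sup>2 + 1 + \<bar>\<beta>\<bar>"
    using c by (simp add: field_simps abs_if)
  finally have first: "(LINT s:{0..<1}|lborel. (Q s - \<beta>)\<^sup>2) \<le> \<beta>\<^sup>2 + 1 + \<bar>\<beta>\<bar>" .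
  have "(LINT s:{0..<1}|lborel. Q s * quantile M \<rho> (1 - s)) \<le> c * e * K"
    unfolding Q using pairing e c assms(3) by simp
  also have "c * e * K = K / c"
    unfolding e_def using c by (simp add: power2_eq_square)
  also have "\<dots> \<le> K"
    using c assms(2)[of 0] mult_left_mono[of 1 c K] by (simp add: divide_le_eq)
  finally have second: "lam * (LINT s:{0..<1}|lborel. Q s * quantile M \<rho> (1 - s)) \<le> lam * K"
    using assms(4) by simp
  have third: "c * (w 1 - Lim (at_left 1) w) \<le> (LINT s:{0..1}|wmeas w. qext Q s)"
    unfolding Q using w_integral tail(2) e c by simp
  from first second third show "Lfun M X \<rho> Q w \<beta> lam \<le> \<beta>\<^sup>2 + 1 + \<bar>\<beta>\<bar> + lam * K
       - c * (w 1 - Lim (at_left 1) w) + (LINT s:{0..1}|wmeas w. quantile M X s)"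
    unfolding Lfun_def by linarith
qed

theorem lemma5p1:
  fixes M :: "'a measure" and X0 \<rho> :: "'a \<Rightarrow> real"
    and \<beta> lam :: real and w :: "real \<Rightarrow> real"
  assumes "prob_space M" and "complete_measure M" and "nonatomic M"
    and "\<rho> \<in> borel_measurable M" and "integrable M (\<lambda>x. (\<rho> x)\<^sup>2)"
    and "AE x in M. \<rho> x > 0" and "prob_space.variance M \<rho> > 0"
    and "X0 \<in> borel_measurable M" and "\<exists>C. AE x in M. \<bar>X0 x\<bar> \<le> C"
    and "lam > 0"
    and "w \<in> Wicx"
    and "w 1 > Lim (at_left 1) w"
  shows "\<forall>B::real. \<exists>Q\<in>Qset.
           set_integrable lborel {0..<1} (\<lambda>s. Q s * quantile M \<rho> (1 - s))
         \<and> set_integrable (wmeas w) {0..1} (qext Q)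
         \<and> Lfun M X0 \<rho> Q w \<beta> lam < B"
proof
  fix B :: real
  obtain g K where g: "mono g" "\<And>t. 0 \<le> g t \<and> g t \<le> K" "\<And>t. t \<in> {0..1/2} \<Longrightarrow> quantile M \<rho> t = g t"
    using prob_space.quantile_near_0_bounded_mono[OF assms(1,4,6)] by blast
  define J where "J = w 1 - Lim (at_left 1) w"
  define A where "A = \<beta>\<^sup>2 + 1 + \<bar>\<beta>\<bar> + lam * K + (LINT s:{0..1}|wmeas w. quantile M X0 s)"
  define c where "c = max 2 ((A - B) / J + 1)"
  have "J > 0" using assms(12) unfolding J_def by simp
  then have "A - c * J < B"
    unfolding c_def by (auto simp: max_def field_simps split: if_splits)
  have "c \<ge> 2" unfolding c_def by simp
  note Q = Lfun_tail_step_le[OF g assms(10,11) this]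
  have "Lfun M X0 \<rho> (tail_step (1 / c\<^sup>2) c) w \<beta> lam < B"
    using Q(4)[where X = X0 and \<beta> = \<beta>] \<open>A - c * J < B\<close> unfolding A_def J_def by linarith
  with Q(1-3) show "\<exists>Q\<in>Qset. set_integrable lborel {0..<1} (\<lambda>s. Q s * quantile M \<rho> (1 - s))
         \<and> set_integrable (wmeas w) {0..1} (qext Q) \<and> Lfun M X0 \<rho> Q w \<beta> lam < B"
    by blast
qed

end
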